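(* Let $A$ be a finite-dimensional complex Hilbert space. Every doubly mixed vector $\Psi\in A^{\otimes 4}$ is doubly dilated.
   Context: Fix an orthonormal basis $e_1,\dots,e_d$ of $A$ (identifying $\overline{A}$ with $A$ via this basis) and identify $\Psi\in A^{\otimes 4}$ with its coefficient array $\Psi(a_1,a_2,a_3,a_4)$ with respect to $e_{a_1}\otimes e_{a_2}\otimes e_{a_3}\otimes e_{a_4}$. Doubly mixed: $\Psi$ is doubly mixed if there are finitely many indices $k=1,\dots,m$, a probability distribution $(r_k)_k$, for each $k$ finitely many unit vectors $\phi_{k1},\dots,\phi_{kn_k}\in A$ and a probability distribution $(p_{ki})_{i}$, such that, writing $\rho_k(a,b)=\sum_{i=1}^{n_k}p_{ki}\,\phi_{ki}(a)\overline{\phi_{ki}(b)}$ (where $\phi(a)$ is the $a$-th coordinate of $\phi$), we have $\Psi(a_1,a_2,a_3,a_4)=\sum_{k=1}^m r_k\,\rho_k(a_1,a_2)\,\rho_k(a_3,a_4)$ for all indices. Doubly dilated: $\Psi$ is doubly dilated if there are finite nonempty index sets $I_B, I_C$ and an arbitrary complex array $\psi(a,i,k)$ ($a\in\{1,\dots,d\}$, $i\in I_B$, $k\in I_C$), i.e. a vector in $A\otimes B\otimes C$ for finite-dimensional spaces $B,C$ with bases indexed by $I_B,I_C$, such that $\Psi(a_1,a_2,a_3,a_4)=\sum_{k,l\in I_C}\sum_{i,j\in I_B}\psi(a_1,i,k)\,\overline{\psi(a_2,i,l)}\,\psi(a_3,j,l)\,\overline{\psi(a_4,j,k)}$ for all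 indices. *)

theory Defs
  imports "HOL-Analysis.Analysis"
begin

text \<open>A is C^d with orthonormal basis indexed by {0..<d}. Vectors of A are coefficient
  functions nat => complex (only indices < d matter); a 4-tensor Psi in A^{(x)4} is its
  coefficient array, only entries with all indices < d matter.\<close>

definition unit_vec :: "nat \<Rightarrow> (nat \<Rightarrow> complex) \<Rightarrow> bool" where
  "unit_vec d \<phi> \<longleftrightarrow> (\<Sum>a<d. (cmod (\<phi> a))\<^sup>2) = 1"

definition doubly_mixed :: "nat \<Rightarrow> (nat \<Rightarrow> nat \<Rightarrow> nat \<Rightarrow> nat \<Rightarrow> complex) \<Rightarrow> bool" where
  "doubly_mixed d \<Psi> \<longleftrightarrow>
    (\<exists>(m::nat) (r::nat \<Rightarrow> real) (n::nat \<Rightarrow> nat) (\<phi>::nat \<Rightarrow> nat \<Rightarrow> nat \<Rightarrow> complex)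
        (p::nat \<Rightarrow> nat \<Rightarrow> real).
      m \<ge> 1 \<and> (\<forall>k<m. r k \<ge> 0) \<and> (\<Sum>k<m. r k) = 1 \<and>
      (\<forall>k<m. n k \<ge> 1 \<and> (\<forall>i<n k. p k i \<ge> 0 \<and> unit_vec d (\<phi> k i)) \<and> (\<Sum>i<n k. p k i) = 1) \<and>
      (let \<rho> = (\<lambda>k a b. \<Sum>i<n k. complex_of_real (p k i) * \<phi> k i a * cnj (\<phi> k i b)) in
        \<forall>a1<d. \<forall>a2<d. \<forall>a3<d. \<forall>a4<d.
          \<Psi> a1 a2 a3 a4 = (\<Sum>k<m. complex_of_real (r k) * \<rho> k a1 a2 * \<rho> k a3 a4)))"

definition doubly_dilated :: "nat \<Rightarrow> (nat \<Rightarrow> nat \<Rightarrow> nat \<Rightarrow> nat \<Rightarrow> complex) \<Rightarrow> bool" where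
  "doubly_dilated d \<Psi> \<longleftrightarrow>
    (\<exists>(IB::nat set) (IC::nat set) (\<psi>::nat \<Rightarrow> nat \<Rightarrow> nat \<Rightarrow> complex).
      finite IB \<and> IB \<noteq> {} \<and> finite IC \<and> IC \<noteq> {} \<and>
      (\<forall>a1<d. \<forall>a2<d. \<forall>a3<d. \<forall>a4<d.
         \<Psi> a1 a2 a3 a4 =
           (\<Sum>k\<in>IC. \<Sum>l\<in>IC. \<Sum>i\<in>IB. \<Sum>j\<in>IB.
              \<psi> a1 i k * cnj (\<psi> a2 i l) * \<psi> a3 j l * cnj (\<psi> a4 j k))))"

end

theory Submission
  imports Defs
begin

text \<open>Write \<open>\<Psi> = \<Sum>k. r k \<cdot> \<rho> k \<otimes> \<rho> k\<close> with \<open>\<rho> k = \<Sum>i. p k i \<cdot> |\<phi> k i\<rangle>\<langle>\<phi> k i|\<close> and take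
  \<open>\<psi> = \<Sum>k i. (r k)\<^sup>1\<^sup>/\<^sup>4 (p k i)\<^sup>1\<^sup>/\<^sup>2 \<cdot> \<phi> k i \<otimes> e(k,i) \<otimes> e(k)\<close>. Contracting \<open>\<psi>\<close> with
  \<open>cnj \<psi>\<close> over \<open>B\<close> gives a matrix indexed by \<open>C\<close> that is block diagonal with blocks
  \<open>\<surd>(r k) \<cdot> \<rho> k\<close>, because the \<open>B\<close>-index remembers \<open>k\<close>. The doubly dilated expression is the
  trace of a product of two such contractions, so only the diagonal blocks survive and it
  equals \<open>\<Sum>k. r k \<cdot> \<rho> k \<otimes> \<rho> k\<close>.\<close>

definition partial_gram ::
    "nat set \<Rightarrow> (nat \<Rightarrow> nat \<Rightarrow> nat \<Rightarrow> complex) \<Rightarrow> nat \<Rightarrow> nat \<Rightarrow> nat \<Rightarrow> nat \<Rightarrow> complex" where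
  "partial_gram IB \<psi> a a' k l = (\<Sum>i\<in>IB. \<psi> a i k * cnj (\<psi> a' i l))"

lemma dilated_sum_eq_trace_partial_gram:
  "(\<Sum>k\<in>IC. \<Sum>l\<in>IC. \<Sum>i\<in>IB. \<Sum>j\<in>IB.
       \<psi> a1 i k * cnj (\<psi> a2 i l) * \<psi> a3 j l * cnj (\<psi> a4 j k)) =
   (\<Sum>k\<in>IC. \<Sum>l\<in>IC. partial_gram IB \<psi> a1 a2 k l * partial_gram IB \<psi> a3 a4 l k)"
  by (simp add: partial_gram_def sum_product mult.assoc)

lemma dilated_sum_block_diagonal:
  assumes "finite IC"
    and "\<And>a a' k l. k \<in> IC \<Longrightarrow> l \<in> IC \<Longrightarrow>
           partial_gram IB \<psi> a a' k l = (if k = l then g k a a' else 0)"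
  shows "(\<Sum>k\<in>IC. \<Sum>l\<in>IC. \<Sum>i\<in>IB. \<Sum>j\<in>IB.
            \<psi> a1 i k * cnj (\<psi> a2 i l) * \<psi> a3 j l * cnj (\<psi> a4 j k)) =
         (\<Sum>k\<in>IC. g k a1 a2 * g k a3 a4)"
  unfolding dilated_sum_eq_trace_partial_gram
  by (intro sum.cong refl) (simp add: assms if_distrib cong: if_cong)

text \<open>The \<open>B\<close>-index \<open>prod_encode (k, i)\<close> carries the block \<open>k\<close>; \<open>q\<close> are the squared weights.\<close>

definition block_dilation ::
    "(nat \<Rightarrow> nat \<Rightarrow> real) \<Rightarrow> (nat \<Rightarrow> nat \<Rightarrow> nat \<Rightarrow> complex) \<Rightarrow> nat \<Rightarrow> nat \<Rightarrow> nat \<Rightarrow> complex" where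
  "block_dilation q \<phi> a b c =
     (case prod_decode b of (k, i) \<Rightarrow> if c = k then complex_of_real (sqrt (q k i)) * \<phi> k i a else 0)"

definition block_index :: "nat \<Rightarrow> (nat \<Rightarrow> nat) \<Rightarrow> nat set" where
  "block_index m n = prod_encode ` (SIGMA k:{..<m}. {..<n k})"

lemma finite_block_index: "finite (block_index m n)"
  by (simp add: block_index_def)

lemma block_index_nonempty: "0 < m \<Longrightarrow> 0 < n 0 \<Longrightarrow> block_index m n \<noteq> {}"
  by (auto simp: block_index_def)

lemma partial_gram_block_dilation:
  assumes q_nonneg: "\<And>i. i < n k \<Longrightarrow> q k i \<ge> 0" and "k < m"
  shows "partial_gram (block_index m n) (block_dilation q \<phi>) a a' k l =
    (if k = l then \<Sum>i<n k. complex_of_real (q k i) * \<phi> k i a * cnj (\<phi> k i a') else 0)"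
proof -
  have "partial_gram (block_index m n) (block_dilation q \<phi>) a a' k l =
      (\<Sum>(k', i)\<in>(SIGMA k:{..<m}. {..<n k}).
         block_dilation q \<phi> a (prod_encode (k', i)) k * cnj (block_dilation q \<phi> a' (prod_encode (k', i)) l))"
    unfolding partial_gram_def block_index_def
    by (subst sum.reindex) (auto intro: inj_onI simp: prod_encode_eq)
  also have "\<dots> = (\<Sum>k'<m. \<Sum>i<n k'. if k' = k \<and> k' = l then
      complex_of_real (q k' i) * \<phi> k' i a * cnj (\<phi> k' i a') else 0)"
    by (simp add: sum.Sigma[symmetric] block_dilation_def)
       (intro sum.cong refl; auto simp: q_nonneg algebra_simps simp flip: of_real_mult)
  also have "\<dots> = (if k = l then \<Sum>i<n k. complex_of_real (q k i) * \<phi> k i a * cnj (\<phi> k i a') else 0)"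
  proof -
    have pull_out: "(\<Sum>i\<in>A. if P then g i else 0) = (if P then sum g A else 0)"
        for P A and g :: "nat \<Rightarrow> complex"
      by (auto intro!: sum.neutral)
    show ?thesis
      using \<open>k < m\<close> by (simp only: pull_out) (auto simp: sum.delta intro: sum.neutral)
  qed
  finally show ?thesis .
qed

theorem theorem2:
  fixes d :: nat and \<Psi> :: "nat \<Rightarrow> nat \<Rightarrow> nat \<Rightarrow> nat \<Rightarrow> complex"
  assumes "doubly_mixed d \<Psi>"
  shows "doubly_dilated d \<Psi>"
proof -
  obtain m :: nat and r :: "nat \<Rightarrow> real" and n :: "nat \<Rightarrow> nat" and p :: "nat \<Rightarrow> nat \<Rightarrow> real"
    and \<phi> :: "nat \<Rightarrow> nat \<Rightarrow> nat \<Rightarrow> complex" where "m \<ge> 1" and r_nonneg: "\<forall>k<m. r k \<ge> 0"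
    and p_nonneg: "\<forall>k<m. n k \<ge> 1 \<and> (\<forall>i<n k. p k i \<ge> 0)"
    and \<Psi>_eq: "\<forall>a1<d. \<forall>a2<d. \<forall>a3<d. \<forall>a4<d. \<Psi> a1 a2 a3 a4 = (\<Sum>k<m. complex_of_real (r k) *
         (\<Sum>i<n k. complex_of_real (p k i) * \<phi> k i a1 * cnj (\<phi> k i a2)) *
         (\<Sum>i<n k. complex_of_real (p k i) * \<phi> k i a3 * cnj (\<phi> k i a4)))"
    using assms unfolding doubly_mixed_def Let_def by blast
  define \<rho> where "\<rho> k a b = (\<Sum>i<n k. complex_of_real (p k i) * \<phi> k i a * cnj (\<phi> k i b))" for k a b
  define \<psi> where "\<psi> = block_dilation (\<lambda>k i. sqrt (r k) * p k i) \<phi>"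
  have gram: "partial_gram (block_index m n) \<psi> a a' k l =
      (if k = l then complex_of_real (sqrt (r k)) * \<rho> k a a' else 0)" if "k < m" for a a' k l
    using that r_nonneg p_nonneg unfolding \<psi>_def \<rho>_def
    by (subst partial_gram_block_dilation) (auto simp: sum_distrib_left algebra_simps)
  have sqrt_sq: "complex_of_real (sqrt (r k)) * complex_of_real (sqrt (r k)) = r k" if "k < m" for k
    using that r_nonneg by (simp flip: of_real_mult)
  show ?thesis
    unfolding doubly_dilated_def
  proof (intro exI conjI allI impI)
    show "finite (block_index m n)" "finite {..<m}" by (simp_all add: finite_block_index)
    have "0 < m" "0 < n 0"
      using \<open>m \<ge> 1\<close> p_nonneg by auto
    then show "{..<m} \<noteq> {}" "block_index m n \<noteq> {}"
      by (auto dest: block_index_nonempty)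
    fix a1 a2 a3 a4 assume "a1 < d" "a2 < d" "a3 < d" "a4 < d"
    then show "\<Psi> a1 a2 a3 a4 = (\<Sum>k\<in>{..<m}. \<Sum>l\<in>{..<m}. \<Sum>i\<in>block_index m n. \<Sum>j\<in>block_index m n.
        \<psi> a1 i k * cnj (\<psi> a2 i l) * \<psi> a3 j l * cnj (\<psi> a4 j k))"
      using \<Psi>_eq gram sqrt_sq
      by (subst dilated_sum_block_diagonal[where g = "\<lambda>k a a'. sqrt (r k) * \<rho> k a a'"])
         (auto simp: \<rho>_def algebra_simps intro!: sum.cong)
  qed
qed

end
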